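(* Assume the abstract framework described in the context. Let $u\in\mathcal{H}_2^\Omega$ satisfy $(Lu)|_\Omega=0$, and let $U\in\mathcal{H}_2$ be any element with $U|_\Omega=u$. Then $$u=-\mathbf{D}^B_\Omega(\operatorname{Tr}_2U)+(\mathbf{S}^L_\Omega(\mathbf{M}^\Omega_Bu))|_\Omega,\qquad 0=\mathbf{D}^B_{\mathcal{C}}(\operatorname{Tr}_2U)+(\mathbf{S}^L_{\mathcal{C}}(\mathbf{M}^\Omega_Bu))|_{\mathcal{C}}.$$
   Context: Abstract framework. Let $\mathcal{H}_1,\mathcal{H}_2$ be complex Hilbert spaces, and for $j=1,2$ let $\widehat{\mathcal{H}}_j^\Omega$, $\widehat{\mathcal{H}}_j^{\mathcal{C}}$, $\widehat{\mathcal{D}}_j$ be normed (or seminormed) vector spaces. We are given bounded linear operators $\operatorname{Tr}_j:\mathcal{H}_j\to\widehat{\mathcal{D}}_j$ and bounded linear "restriction" operators $F\mapsto F|_\Omega\in\widehat{\mathcal{H}}_j^\Omega$ and $F\mapsto F|_{\mathcal{C}}\in\widehat{\mathcal{H}}_j^{\mathcal{C}}$ on $\mathcal{H}_j$. Define $\mathcal{H}_j^\Omega=\{F|_\Omega:F\in\mathcal{H}_j\}$ with norm $\|f\|=\inf\{\|F\|_{\mathcal{H}_j}:F|_\Omega=f\}$, similarly $\mathcal{H}_j^{\mathcal{C}}$, and $\mathcal{D}_j=\{\operatorname{Tr}_jF:F\in\mathcal{H}_j\}$ with the analogous quotient norm (modulo elements of norm zero). Let $\mathcal{N}_2=\mathcal{D}_1^*$,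 $\mathcal{N}_1=\mathcal{D}_2^*$ with duality pairings $\langle\cdot,\cdot\rangle$. We are given bounded bilinear forms $B:\mathcal{H}_1\times\mathcal{H}_2\to\mathbb{C}$, $B^\Omega:\mathcal{H}_1^\Omega\times\mathcal{H}_2^\Omega\to\mathbb{C}$, $B^{\mathcal{C}}:\mathcal{H}_1^{\mathcal{C}}\times\mathcal{H}_2^{\mathcal{C}}\to\mathbb{C}$, and $\lambda>0$ such that for all $u\in\mathcal{H}_1$, $v\in\mathcal{H}_2$, $\varphi,\psi\in\mathcal{H}_j$: (i) $\sup_{w\ne0}|B(w,v)|/\|w\|_{\mathcal{H}_1}\ge\lambda\|v\|_{\mathcal{H}_2}$ and $\sup_{w\ne0}|B(u,w)|/\|w\|_{\mathcal{H}_2}\ge\lambda\|u\|_{\mathcal{H}_1}$; (ii) $B(u,v)=B^\Omega(u|_\Omega,v|_\Omega)+B^{\mathcal{C}}(u|_{\mathcal{C}},v|_{\mathcal{C}})$; (iii) if $\operatorname{Tr}_j\varphi=\operatorname{Tr}_j\psi$ then there is $w\in\mathcal{H}_j$ with $w|_\Omega=\varphi|_\Omega$, $w|_{\mathcal{C}}=\psi|_{\mathcal{C}}$, $\operatorname{Tr}_jw=\operatorname{Tr}_j\varphi$. Definitions: for $u\in\mathcal{H}_2^\Omega$, $(Lu)|_\Omega=0$ means $B^\Omega(\varphi|_\Omega,u)=0$ for all $\varphi\in\mathcal{H}_1$ with $\operatorname{Tr}_1\varphi=0$. For such $u$ the Neumann boundary value $\mathbf{M}^\Omega_Bu\in\mathcal{N}_2$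 is defined by $\langle\operatorname{Tr}_1\varphi,\mathbf{M}^\Omega_Bu\rangle=B^\Omega(\varphi|_\Omega,u)$ for all $\varphi\in\mathcal{H}_1$ (well defined). For $u\in\mathcal{H}_2^\Omega$, $L(u\mathbf{1}_\Omega)\in\mathcal{H}_1^*$ is $\langle\varphi,L(u\mathbf{1}_\Omega)\rangle=B^\Omega(\varphi|_\Omega,u)$, and analogously $L(u\mathbf{1}_{\mathcal{C}})$ for $u\in\mathcal H_2^{\mathcal C}$ with $B^{\mathcal{C}}$; for $F\in\mathcal H_2$, $L(\mathbf 1_\Omega F)=L(F|_\Omega\mathbf 1_\Omega)$. Newton potential: for $H\in\mathcal{H}_1^*$, $\Pi^LH\in\mathcal{H}_2$ is the unique element with $B(\varphi,\Pi^LH)=\langle\varphi,H\rangle$ for all $\varphi\in\mathcal{H}_1$. Single layer potential: for $g\in\mathcal{N}_2$, $\mathbf{S}^L_\Omega g=\mathbf{S}^L_{\mathcal{C}}g$ is the unique element of $\mathcal{H}_2$ with $B(\varphi,\mathbf{S}^L_\Omega g)=\langle\operatorname{Tr}_1\varphi,g\rangle$ for all $\varphi\in\mathcal{H}_1$. Double layer potentials: for $f\in\mathcal{D}_2$ and any $F\in\mathcal{H}_2$ with $\operatorname{Tr}_2F=f$, $\mathbf{D}^B_\Omega f=-F|_\Omega+(\Pi^L(L(\mathbf{1}_\Omega F)))|_\Omega\in\mathcal{H}_2^\Omega$ and $\mathbf{D}^B_{\mathcal{C}}f=-F|_{\mathcal{C}}+(\Pi^L(L(\mathbf{1}_{\mathcal{C}}F)))|_{\mathcal{C}}\in\mathcal{H}_2^{\mathcal{C}}$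 (independent of the choice of $F$). *)

theory Defs
  imports Complex_Main "HOL-Library.Extended_Nonnegative_Real"
begin

definition hnorm :: "('a \<Rightarrow> 'a \<Rightarrow> complex) \<Rightarrow> 'a \<Rightarrow> real" where
  "hnorm ip x = sqrt (Re (ip x x))"

definition complex_hilbert :: "(complex \<Rightarrow> 'a::ab_group_add \<Rightarrow> 'a) \<Rightarrow> ('a \<Rightarrow> 'a \<Rightarrow> complex) \<Rightarrow> bool" where
  "complex_hilbert sc ip \<longleftrightarrow>
     Vector_Spaces.vector_space sc \<and>
     (\<forall>x y z. ip (x + y) z = ip x z + ip y z) \<and>
     (\<forall>c x y. ip (sc c x) y = c * ip x y) \<and>
     (\<forall>x y. ip y x = cnj (ip x y)) \<and>
     (\<forall>x. 0 \<le> Re (ip x x)) \<and>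
     (\<forall>x. ip x x = 0 \<longrightarrow> x = 0) \<and>
     (\<forall>X :: nat \<Rightarrow> 'a.
        (\<forall>e>0. \<exists>N. \<forall>m\<ge>N. \<forall>n\<ge>N. hnorm ip (X m - X n) < e) \<longrightarrow>
        (\<exists>l. \<forall>e>0. \<exists>N. \<forall>n\<ge>N. hnorm ip (X n - l) < e))"

definition seminormed_space :: "(complex \<Rightarrow> 'a::ab_group_add \<Rightarrow> 'a) \<Rightarrow> ('a \<Rightarrow> real) \<Rightarrow> bool" where
  "seminormed_space sc N \<longleftrightarrow>
     Vector_Spaces.vector_space sc \<and>
     (\<forall>x. 0 \<le> N x) \<and>
     (\<forall>x y. N (x + y) \<le> N x + N y) \<and>
     (\<forall>c x. N (sc c x) = cmod c * N x)"

definition bounded_lin ::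
  "(complex \<Rightarrow> 'a::ab_group_add \<Rightarrow> 'a) \<Rightarrow> ('a \<Rightarrow> real) \<Rightarrow>
   (complex \<Rightarrow> 'b::ab_group_add \<Rightarrow> 'b) \<Rightarrow> ('b \<Rightarrow> real) \<Rightarrow> ('a \<Rightarrow> 'b) \<Rightarrow> bool" where
  "bounded_lin sa Na sb Nb f \<longleftrightarrow>
     Vector_Spaces.linear sa sb f \<and> (\<exists>K. \<forall>x. Nb (f x) \<le> K * Na x)"

definition qnorm :: "('a \<Rightarrow> real) \<Rightarrow> ('a \<Rightarrow> 'b) \<Rightarrow> 'b \<Rightarrow> real" where
  "qnorm N R y = Inf (N ` {F. R F = y})"

definition bounded_bilin_on ::
  "'a set \<Rightarrow> (complex \<Rightarrow> 'a::ab_group_add \<Rightarrow> 'a) \<Rightarrow> ('a \<Rightarrow> real) \<Rightarrow>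
   'c set \<Rightarrow> (complex \<Rightarrow> 'c::ab_group_add \<Rightarrow> 'c) \<Rightarrow> ('c \<Rightarrow> real) \<Rightarrow>
   ('a \<Rightarrow> 'c \<Rightarrow> complex) \<Rightarrow> bool" where
  "bounded_bilin_on A sa Na C sc Nc b \<longleftrightarrow>
     (\<forall>x\<in>A. \<forall>x'\<in>A. \<forall>y\<in>C. b (x + x') y = b x y + b x' y) \<and>
     (\<forall>c. \<forall>x\<in>A. \<forall>y\<in>C. b (sa c x) y = c * b x y) \<and>
     (\<forall>x\<in>A. \<forall>y\<in>C. \<forall>y'\<in>C. b x (y + y') = b x y + b x y') \<and>
     (\<forall>c. \<forall>x\<in>A. \<forall>y\<in>C. b x (sc c y) = c * b x y) \<and>
     (\<exists>K. \<forall>x\<in>A. \<forall>y\<in>C. cmod (b x y) \<le> K * Na x * Nc y)"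

text \<open>Types: 'h1,'h2 = H_1,H_2; 'o_j = hat H_j^Omega; 'c_j = hat H_j^C; 'd_j = hat D_j.\<close>
record ('h1, 'h2, 'o1, 'o2, 'c1, 'c2, 'd1, 'd2) frame =
  sc1 :: "complex \<Rightarrow> 'h1 \<Rightarrow> 'h1"
  ip1 :: "'h1 \<Rightarrow> 'h1 \<Rightarrow> complex"
  sc2 :: "complex \<Rightarrow> 'h2 \<Rightarrow> 'h2"
  ip2 :: "'h2 \<Rightarrow> 'h2 \<Rightarrow> complex"
  scO1 :: "complex \<Rightarrow> 'o1 \<Rightarrow> 'o1"
  nO1 :: "'o1 \<Rightarrow> real"
  scO2 :: "complex \<Rightarrow> 'o2 \<Rightarrow> 'o2"
  nO2 :: "'o2 \<Rightarrow> real"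
  scC1 :: "complex \<Rightarrow> 'c1 \<Rightarrow> 'c1"
  nC1 :: "'c1 \<Rightarrow> real"
  scC2 :: "complex \<Rightarrow> 'c2 \<Rightarrow> 'c2"
  nC2 :: "'c2 \<Rightarrow> real"
  scD1 :: "complex \<Rightarrow> 'd1 \<Rightarrow> 'd1"
  nD1 :: "'d1 \<Rightarrow> real"
  scD2 :: "complex \<Rightarrow> 'd2 \<Rightarrow> 'd2"
  nD2 :: "'d2 \<Rightarrow> real"
  tr1 :: "'h1 \<Rightarrow> 'd1"
  tr2 :: "'h2 \<Rightarrow> 'd2"
  rO1 :: "'h1 \<Rightarrow> 'o1"
  rO2 :: "'h2 \<Rightarrow> 'o2"
  rC1 :: "'h1 \<Rightarrow> 'c1"
  rC2 :: "'h2 \<Rightarrow> 'c2"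
  bf :: "'h1 \<Rightarrow> 'h2 \<Rightarrow> complex"
  bO :: "'o1 \<Rightarrow> 'o2 \<Rightarrow> complex"
  bC :: "'c1 \<Rightarrow> 'c2 \<Rightarrow> complex"
  lam :: real

definition abstract_framework :: "('h1::ab_group_add, 'h2::ab_group_add, 'o1::ab_group_add, 'o2::ab_group_add, 'c1::ab_group_add, 'c2::ab_group_add, 'd1::ab_group_add, 'd2::ab_group_add) frame \<Rightarrow> bool" where
  "abstract_framework F \<longleftrightarrow>
     complex_hilbert (sc1 F) (ip1 F) \<and> complex_hilbert (sc2 F) (ip2 F) \<and>
     seminormed_space (scO1 F) (nO1 F) \<and> seminormed_space (scO2 F) (nO2 F) \<and>
     seminormed_space (scC1 F) (nC1 F) \<and> seminormed_space (scC2 F) (nC2 F) \<and>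
     seminormed_space (scD1 F) (nD1 F) \<and> seminormed_space (scD2 F) (nD2 F) \<and>
     bounded_lin (sc1 F) (hnorm (ip1 F)) (scD1 F) (nD1 F) (tr1 F) \<and>
     bounded_lin (sc2 F) (hnorm (ip2 F)) (scD2 F) (nD2 F) (tr2 F) \<and>
     bounded_lin (sc1 F) (hnorm (ip1 F)) (scO1 F) (nO1 F) (rO1 F) \<and>
     bounded_lin (sc2 F) (hnorm (ip2 F)) (scO2 F) (nO2 F) (rO2 F) \<and>
     bounded_lin (sc1 F) (hnorm (ip1 F)) (scC1 F) (nC1 F) (rC1 F) \<and>
     bounded_lin (sc2 F) (hnorm (ip2 F)) (scC2 F) (nC2 F) (rC2 F) \<and>
     bounded_bilin_on UNIV (sc1 F) (hnorm (ip1 F)) UNIV (sc2 F) (hnorm (ip2 F)) (bf F) \<and>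
     bounded_bilin_on (range (rO1 F)) (scO1 F) (qnorm (hnorm (ip1 F)) (rO1 F))
                      (range (rO2 F)) (scO2 F) (qnorm (hnorm (ip2 F)) (rO2 F)) (bO F) \<and>
     bounded_bilin_on (range (rC1 F)) (scC1 F) (qnorm (hnorm (ip1 F)) (rC1 F))
                      (range (rC2 F)) (scC2 F) (qnorm (hnorm (ip2 F)) (rC2 F)) (bC F) \<and>
     0 < lam F \<and>
     \<comment> \<open>(i) inf-sup conditions\<close>
     (\<forall>v. ennreal (lam F * hnorm (ip2 F) v)
            \<le> (SUP w\<in>{w. w \<noteq> 0}. ennreal (cmod (bf F w v) / hnorm (ip1 F) w))) \<and>
     (\<forall>u. ennreal (lam F * hnorm (ip1 F) u)
            \<le> (SUP w\<in>{w. w \<noteq> 0}. ennreal (cmod (bf F u w) / hnorm (ip2 F) w))) \<and>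
     \<comment> \<open>(ii) splitting of B\<close>
     (\<forall>u v. bf F u v = bO F (rO1 F u) (rO2 F v) + bC F (rC1 F u) (rC2 F v)) \<and>
     \<comment> \<open>(iii) gluing\<close>
     (\<forall>\<phi> \<psi>. tr1 F \<phi> = tr1 F \<psi> \<longrightarrow>
        (\<exists>w. rO1 F w = rO1 F \<phi> \<and> rC1 F w = rC1 F \<psi> \<and> tr1 F w = tr1 F \<phi>)) \<and>
     (\<forall>\<phi> \<psi>. tr2 F \<phi> = tr2 F \<psi> \<longrightarrow>
        (\<exists>w. rO2 F w = rO2 F \<phi> \<and> rC2 F w = rC2 F \<psi> \<and> tr2 F w = tr2 F \<phi>))"

definition HO2 :: "('h1::ab_group_add, 'h2::ab_group_add, 'o1::ab_group_add, 'o2::ab_group_add, 'c1::ab_group_add, 'c2::ab_group_add, 'd1::ab_group_add, 'd2::ab_group_add) frame \<Rightarrow> 'o2 set" where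
  "HO2 F = range (rO2 F)"

definition L_Omega_zero :: "('h1::ab_group_add, 'h2::ab_group_add, 'o1::ab_group_add, 'o2::ab_group_add, 'c1::ab_group_add, 'c2::ab_group_add, 'd1::ab_group_add, 'd2::ab_group_add) frame \<Rightarrow> 'o2 \<Rightarrow> bool" where
  "L_Omega_zero F u \<longleftrightarrow> (\<forall>\<phi>. tr1 F \<phi> = 0 \<longrightarrow> bO F (rO1 F \<phi>) u = 0)"

text \<open>N_2 = D_1^*: bounded linear functionals on D_1 = range tr1 w.r.t. the quotient
  seminorm; represented as functions on hat D_1 that vanish off D_1 (canonical
  representative); the pairing <d, g> is g d.\<close>
definition N2 :: "('h1::ab_group_add, 'h2::ab_group_add, 'o1::ab_group_add, 'o2::ab_group_add, 'c1::ab_group_add, 'c2::ab_group_add, 'd1::ab_group_add, 'd2::ab_group_add) frame \<Rightarrow> ('d1 \<Rightarrow> complex) set" where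
  "N2 F = {g. (\<forall>x\<in>range (tr1 F). \<forall>y\<in>range (tr1 F). g (x + y) = g x + g y) \<and>
              (\<forall>c. \<forall>x\<in>range (tr1 F). g (scD1 F c x) = c * g x) \<and>
              (\<exists>K. \<forall>x\<in>range (tr1 F). cmod (g x) \<le> K * qnorm (hnorm (ip1 F)) (tr1 F) x) \<and>
              (\<forall>x. x \<notin> range (tr1 F) \<longrightarrow> g x = 0)}"

definition neumann :: "('h1::ab_group_add, 'h2::ab_group_add, 'o1::ab_group_add, 'o2::ab_group_add, 'c1::ab_group_add, 'c2::ab_group_add, 'd1::ab_group_add, 'd2::ab_group_add) frame \<Rightarrow> 'o2 \<Rightarrow> 'd1 \<Rightarrow> complex" where
  "neumann F u = (THE g. g \<in> N2 F \<and> (\<forall>\<phi>. g (tr1 F \<phi>) = bO F (rO1 F \<phi>) u))"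

definition L_Om :: "('h1::ab_group_add, 'h2::ab_group_add, 'o1::ab_group_add, 'o2::ab_group_add, 'c1::ab_group_add, 'c2::ab_group_add, 'd1::ab_group_add, 'd2::ab_group_add) frame \<Rightarrow> 'o2 \<Rightarrow> 'h1 \<Rightarrow> complex" where
  "L_Om F u = (\<lambda>\<phi>. bO F (rO1 F \<phi>) u)"

definition L_C :: "('h1::ab_group_add, 'h2::ab_group_add, 'o1::ab_group_add, 'o2::ab_group_add, 'c1::ab_group_add, 'c2::ab_group_add, 'd1::ab_group_add, 'd2::ab_group_add) frame \<Rightarrow> 'c2 \<Rightarrow> 'h1 \<Rightarrow> complex" where
  "L_C F u = (\<lambda>\<phi>. bC F (rC1 F \<phi>) u)"

definition newton :: "('h1::ab_group_add, 'h2::ab_group_add, 'o1::ab_group_add, 'o2::ab_group_add, 'c1::ab_group_add, 'c2::ab_group_add, 'd1::ab_group_add, 'd2::ab_group_add) frame \<Rightarrow> ('h1 \<Rightarrow> complex) \<Rightarrow> 'h2" where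
  "newton F H = (THE v. \<forall>\<phi>. bf F \<phi> v = H \<phi>)"

text \<open>Single layer potential S^L_Omega g = S^L_C g\<close>
definition single_layer :: "('h1::ab_group_add, 'h2::ab_group_add, 'o1::ab_group_add, 'o2::ab_group_add, 'c1::ab_group_add, 'c2::ab_group_add, 'd1::ab_group_add, 'd2::ab_group_add) frame \<Rightarrow> ('d1 \<Rightarrow> complex) \<Rightarrow> 'h2" where
  "single_layer F g = (THE v. \<forall>\<phi>. bf F \<phi> v = g (tr1 F \<phi>))"

definition double_layer_Om :: "('h1::ab_group_add, 'h2::ab_group_add, 'o1::ab_group_add, 'o2::ab_group_add, 'c1::ab_group_add, 'c2::ab_group_add, 'd1::ab_group_add, 'd2::ab_group_add) frame \<Rightarrow> 'd2 \<Rightarrow> 'o2" where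
  "double_layer_Om F f =
     (let G = (SOME G. tr2 F G = f) in - rO2 F G + rO2 F (newton F (L_Om F (rO2 F G))))"

definition double_layer_C :: "('h1::ab_group_add, 'h2::ab_group_add, 'o1::ab_group_add, 'o2::ab_group_add, 'c1::ab_group_add, 'c2::ab_group_add, 'd1::ab_group_add, 'd2::ab_group_add) frame \<Rightarrow> 'd2 \<Rightarrow> 'c2" where
  "double_layer_C F f =
     (let G = (SOME G. tr2 F G = f) in - rC2 F G + rC2 F (newton F (L_C F (rC2 F G))))"

end

theory Submission
  imports Defs
begin

text \<open>Since B splits as B^Omega + B^C, the Newton potentials of the two pieces of any G add up to G:
  Pi L(1_Omega G) + Pi L(1_C G) = G. If (L u)|_Omega = 0, the Neumann datum of u is the functional
  phi |-> B^Omega(phi|_Omega, u) on traces, so the single layer potential of M u is Pi L(u 1_Omega).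
  Gluing U|_Omega = u to G|_C, where G is the representative of Tr U chosen in the double layer
  potentials, gives W; applying the splitting to G and to W, whose C-parts agree, yields both
  identities. All potentials are well defined by the Babuska-Lax-Milgram theorem, which follows from
  the inf-sup conditions and the Riesz representation theorem.\<close>

lemma linear_map_add: "Vector_Spaces.linear s1 s2 f \<Longrightarrow> f (x + y) = f x + f y"
  using module_hom.add linear_iff_module_hom by metis

lemma linear_map_scale: "Vector_Spaces.linear s1 s2 f \<Longrightarrow> f (s1 c x) = s2 c (f x)"
  using module_hom.scale linear_iff_module_hom by metis

lemma linear_map_diff: "Vector_Spaces.linear s1 s2 f \<Longrightarrow> f (x - y) = f x - f y"
  using module_hom.diff linear_iff_module_hom by metis

definition bounded_functional ::
  "(complex \<Rightarrow> 'a::ab_group_add \<Rightarrow> 'a) \<Rightarrow> ('a \<Rightarrow> real) \<Rightarrow> ('a \<Rightarrow> complex) \<Rightarrow> bool" where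
  "bounded_functional sc N f \<longleftrightarrow>
     (\<forall>x y. f (x + y) = f x + f y) \<and> (\<forall>c x. f (sc c x) = c * f x) \<and>
     (\<exists>C\<ge>0. \<forall>x. cmod (f x) \<le> C * N x)"

lemma bounded_functional_diff:
  assumes "bounded_functional sc N f"
  shows "f (x - y) = f x - f y"
  using assms unfolding bounded_functional_def by (metis add_diff_cancel diff_add_cancel)

lemma bounded_functional_zero:
  assumes "bounded_functional sc N f"
  shows "f 0 = 0"
  using bounded_functional_diff[OF assms, of 0 0] by simp

section \<open>Complex Hilbert spaces\<close>

locale complex_hilbert_space =
  fixes sc :: "complex \<Rightarrow> 'a::ab_group_add \<Rightarrow> 'a" and ip :: "'a \<Rightarrow> 'a \<Rightarrow> complex"
  assumes complex_hilbert: "complex_hilbert sc ip"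
begin

sublocale V: vector_space sc
  using complex_hilbert unfolding complex_hilbert_def by blast

lemma ip_add_left: "ip (x + y) z = ip x z + ip y z"
  using complex_hilbert unfolding complex_hilbert_def by blast

lemma ip_scale_left: "ip (sc c x) y = c * ip x y"
  using complex_hilbert unfolding complex_hilbert_def by blast

lemma ip_cnj_commute: "ip y x = cnj (ip x y)"
  using complex_hilbert unfolding complex_hilbert_def by blast

lemma Re_ip_self_nonneg: "0 \<le> Re (ip x x)"
  using complex_hilbert unfolding complex_hilbert_def by blast

lemma ip_self_eq_0D: "ip x x = 0 \<Longrightarrow> x = 0"
  using complex_hilbert unfolding complex_hilbert_def by blast

lemma ip_zero_left [simp]: "ip 0 z = 0"
  using ip_add_left[of 0 0 z] by simp

lemma ip_minus_left: "ip (- x) z = - ip x z"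
  using minus_unique[of "ip x z" "ip (- x) z"] ip_add_left[of x "- x" z] by simp

lemma ip_diff_left: "ip (x - y) z = ip x z - ip y z"
  using ip_add_left[of x "- y" z] by (simp add: ip_minus_left)

lemma ip_add_right: "ip z (x + y) = ip z x + ip z y"
  by (metis ip_cnj_commute ip_add_left complex_cnj_add)

lemma ip_zero_right [simp]: "ip z 0 = 0"
  by (metis ip_cnj_commute ip_zero_left complex_cnj_zero)

lemma ip_diff_right: "ip z (x - y) = ip z x - ip z y"
  by (metis ip_cnj_commute ip_diff_left complex_cnj_diff)

lemma ip_scale_right: "ip x (sc c y) = cnj c * ip x y"
  by (metis ip_cnj_commute ip_scale_left complex_cnj_mult)

lemma ip_right_eqI: "(\<And>x. ip x a = ip x b) \<Longrightarrow> a = b"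
  using ip_self_eq_0D[of "a - b"] by (simp add: ip_diff_right)

lemma hnorm_nonneg: "0 \<le> hnorm ip x"
  unfolding hnorm_def using Re_ip_self_nonneg by simp

lemma power2_hnorm: "(hnorm ip x)\<^sup>2 = Re (ip x x)"
  unfolding hnorm_def using Re_ip_self_nonneg by simp

lemma ip_self: "ip x x = of_real ((hnorm ip x)\<^sup>2)"
proof -
  have "Im (ip x x) = 0"
    using arg_cong[OF ip_cnj_commute[of x x], of Im] by simp
  then show ?thesis
    by (simp add: power2_hnorm complex_eq_iff)
qed

lemma hnorm_eq_0_iff [simp]: "hnorm ip x = 0 \<longleftrightarrow> x = 0"
  using ip_self[of x] ip_self_eq_0D[of x] by (auto simp: hnorm_def)

lemma hnorm_zero [simp]: "hnorm ip 0 = 0"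
  by simp

lemma hnorm_pos: "x \<noteq> 0 \<Longrightarrow> 0 < hnorm ip x"
  using hnorm_nonneg[of x] by (simp add: order_less_le)

lemma hnorm_scale: "hnorm ip (sc c x) = cmod c * hnorm ip x"
proof -
  have "ip (sc c x) (sc c x) = (c * cnj c) * ip x x"
    by (simp add: ip_scale_left ip_scale_right)
  also have "\<dots> = of_real ((cmod c)\<^sup>2) * of_real ((hnorm ip x)\<^sup>2)"
    by (simp only: ip_self complex_norm_square)
  also have "\<dots> = of_real ((cmod c * hnorm ip x)\<^sup>2)"
    by (simp add: power_mult_distrib)
  finally have "(hnorm ip (sc c x))\<^sup>2 = (cmod c * hnorm ip x)\<^sup>2"
    unfolding power2_hnorm by simp
  then show ?thesis
    using hnorm_nonneg by (simp add: power2_eq_iff_nonneg)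
qed

lemma power2_hnorm_add:
  "(hnorm ip (x + y))\<^sup>2 = (hnorm ip x)\<^sup>2 + (hnorm ip y)\<^sup>2 + 2 * Re (ip x y)"
  using ip_cnj_commute[of x y]
  by (simp add: power2_hnorm ip_add_left ip_add_right)

lemma power2_hnorm_diff:
  "(hnorm ip (x - y))\<^sup>2 = (hnorm ip x)\<^sup>2 + (hnorm ip y)\<^sup>2 - 2 * Re (ip x y)"
  using ip_cnj_commute[of x y]
  by (simp add: power2_hnorm ip_diff_left ip_diff_right)

lemma power2_hnorm_diff_projection:
  assumes "y \<noteq> 0"
  shows "(hnorm ip (x - sc (ip x y / ip y y) y))\<^sup>2
       = (hnorm ip x)\<^sup>2 - (cmod (ip x y))\<^sup>2 / (hnorm ip y)\<^sup>2"
proof -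
  define t where "t = ip x y / ip y y"
  have "ip (x - sc t y) (x - sc t y) = ip x x - cnj t * ip x y - t * cnj (ip x y) + t * cnj t * ip y y"
    by (simp add: ip_diff_left ip_diff_right ip_scale_left ip_scale_right ip_cnj_commute[of x y]
        algebra_simps)
  also have "\<dots> = ip x x - ip x y * cnj (ip x y) / ip y y"
    using assms hnorm_pos[of y] unfolding t_def ip_self[of y] by (simp add: field_simps)
  also have "\<dots> = of_real ((hnorm ip x)\<^sup>2 - (cmod (ip x y))\<^sup>2 / (hnorm ip y)\<^sup>2)"
    unfolding ip_self complex_norm_square[symmetric] by simp
  finally show ?thesis
    unfolding t_def power2_hnorm by simp
qed

lemma cauchy_schwarz: "cmod (ip x y) \<le> hnorm ip x * hnorm ip y"
proof (cases "y = 0")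
  case False
  have "0 \<le> (hnorm ip x)\<^sup>2 - (cmod (ip x y))\<^sup>2 / (hnorm ip y)\<^sup>2"
    using power2_hnorm_diff_projection[OF False, of x] by (metis zero_le_power2)
  then have "(cmod (ip x y))\<^sup>2 \<le> (hnorm ip x * hnorm ip y)\<^sup>2"
    using False pos_divide_le_eq[of "(hnorm ip y)\<^sup>2"] by (simp add: power_mult_distrib)
  then show ?thesis
    using hnorm_nonneg by (meson mult_nonneg_nonneg power2_le_imp_le)
qed simp

lemma hnorm_triangle: "hnorm ip (x + y) \<le> hnorm ip x + hnorm ip y"
proof -
  have "Re (ip x y) \<le> hnorm ip x * hnorm ip y"
    using cauchy_schwarz[of x y] complex_Re_le_cmod order_trans by blast
  then have "(hnorm ip (x + y))\<^sup>2 \<le> (hnorm ip x + hnorm ip y)\<^sup>2"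
    unfolding power2_hnorm_add by (simp add: power2_sum)
  then show ?thesis
    using hnorm_nonneg by (meson add_nonneg_nonneg power2_le_imp_le)
qed

lemma hnorm_triangle_diff: "hnorm ip (x - z) \<le> hnorm ip (x - y) + hnorm ip (y - z)"
  using hnorm_triangle[of "x - y" "y - z"] by simp

lemma apollonius:
  "(hnorm ip (y - z))\<^sup>2 + 4 * (hnorm ip (x - sc (1/2) (y + z)))\<^sup>2
     = 2 * (hnorm ip (x - y))\<^sup>2 + 2 * (hnorm ip (x - z))\<^sup>2"
proof -
  have "sc 2 (x - sc (1/2) (y + z)) = (x - y) + (x - z)"
    using V.scale_left_distrib[of 1 1 x]
    by (simp add: V.scale_right_diff_distrib V.scale_scale algebra_simps)
  then have "(hnorm ip ((x - y) + (x - z)))\<^sup>2 = 4 * (hnorm ip (x - sc (1/2) (y + z)))\<^sup>2"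
    by (metis hnorm_scale norm_numeral power2_eq_square power_mult_distrib mult_numeral_1_right
        numeral_times_numeral num_double)
  moreover have "y - z = (x - z) - (x - y)"
    by simp
  ultimately show ?thesis
    using power2_hnorm_add[of "x - y" "x - z"] power2_hnorm_diff[of "x - z" "x - y"]
      ip_cnj_commute[of "x - y" "x - z"] by simp
qed

definition cauchy :: "(nat \<Rightarrow> 'a) \<Rightarrow> bool" where
  "cauchy X \<longleftrightarrow> (\<forall>e>0. \<exists>N. \<forall>m\<ge>N. \<forall>n\<ge>N. hnorm ip (X m - X n) < e)"

lemma cauchy_converges:
  assumes "cauchy X"
  shows "\<exists>l. (\<lambda>n. hnorm ip (X n - l)) \<longlonglongrightarrow> 0"
proof -
  obtain l where "\<forall>e>0. \<exists>N. \<forall>n\<ge>N. hnorm ip (X n - l) < e"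
    using complex_hilbert assms unfolding complex_hilbert_def cauchy_def by blast
  then show ?thesis
    using hnorm_nonneg by (auto simp: LIMSEQ_iff)
qed

lemma cauchyI_power2:
  assumes bound: "\<And>m n. (hnorm ip (X m - X n))\<^sup>2 \<le> e m + e n" and "e \<longlonglongrightarrow> 0"
  shows "cauchy X"
  unfolding cauchy_def
proof (intro allI impI)
  fix r :: real
  assume "0 < r"
  then have "0 < r\<^sup>2 / 2"
    by simp
  then obtain N where N: "\<And>n. N \<le> n \<Longrightarrow> \<bar>e n\<bar> < r\<^sup>2 / 2"
    using \<open>e \<longlonglongrightarrow> 0\<close> unfolding LIMSEQ_iff by (metis diff_zero real_norm_def)
  show "\<exists>N. \<forall>m\<ge>N. \<forall>n\<ge>N. hnorm ip (X m - X n) < r"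
  proof (intro exI allI impI)
    fix m n
    assume "N \<le> m" "N \<le> n"
    then have "(hnorm ip (X m - X n))\<^sup>2 < r\<^sup>2"
      using bound[of m n] N[of m] N[of n] by linarith
    then show "hnorm ip (X m - X n) < r"
      using \<open>0 < r\<close> power_less_imp_less_base by fastforce
  qed
qed

lemma minimizing_sequence_cauchy:
  assumes midpoint: "\<And>a b. a \<in> M \<Longrightarrow> b \<in> M \<Longrightarrow> sc (1/2) (a + b) \<in> M"
    and lower: "\<And>m. m \<in> M \<Longrightarrow> d \<le> (hnorm ip (x - m))\<^sup>2"
    and X: "\<And>k. X k \<in> M" "\<And>k. (hnorm ip (x - X k))\<^sup>2 \<le> d + e k"
    and "e \<longlonglongrightarrow> 0"
  shows "cauchy X"
proof (rule cauchyI_power2)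
  show "(hnorm ip (X m - X n))\<^sup>2 \<le> 2 * e m + 2 * e n" for m n
    using apollonius[of "X m" "X n" x] lower[OF midpoint[OF X(1)[of m] X(1)[of n]]] X(2)[of m] X(2)[of n]
    by linarith
  show "(\<lambda>k. 2 * e k) \<longlonglongrightarrow> 0"
    using tendsto_mult_right_zero[OF \<open>e \<longlonglongrightarrow> 0\<close>] by simp
qed

definition complete_subspace :: "'a set \<Rightarrow> bool" where
  "complete_subspace M \<longleftrightarrow> 0 \<in> M \<and> (\<forall>a\<in>M. \<forall>b\<in>M. a + b \<in> M) \<and> (\<forall>c. \<forall>a\<in>M. sc c a \<in> M) \<and>
     (\<forall>X. range X \<subseteq> M \<longrightarrow> cauchy X \<longrightarrow> (\<exists>l\<in>M. (\<lambda>n. hnorm ip (X n - l)) \<longlonglongrightarrow> 0))"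

lemma closest_point_exists:
  assumes M: "complete_subspace M"
  shows "\<exists>p\<in>M. \<forall>m\<in>M. hnorm ip (x - p) \<le> hnorm ip (x - m)"
proof -
  define d where "d = (INF m\<in>M. (hnorm ip (x - m))\<^sup>2)"
  have "M \<noteq> {}"
    using M unfolding complete_subspace_def by blast
  have lower: "d \<le> (hnorm ip (x - m))\<^sup>2" if "m \<in> M" for m
    unfolding d_def using that by (intro cINF_lower bdd_belowI2[where m = 0]) auto
  have "\<exists>m\<in>M. (hnorm ip (x - m))\<^sup>2 < d + inverse (real (Suc k))" for k
    using cInf_lessD[of "(\<lambda>m. (hnorm ip (x - m))\<^sup>2) ` M" "d + inverse (real (Suc k))"] \<open>M \<noteq> {}\<close>
    unfolding d_def by auto
  then obtain X where X: "\<And>k. X k \<in> M" "\<And>k. (hnorm ip (x - X k))\<^sup>2 < d + inverse (real (Suc k))"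
    by metis
  have "cauchy X"
  proof (rule minimizing_sequence_cauchy[OF _ lower X(1) less_imp_le[OF X(2)] LIMSEQ_inverse_real_of_nat])
    show "sc (1/2) (a + b) \<in> M" if "a \<in> M" "b \<in> M" for a b
      using M that unfolding complete_subspace_def by blast
  qed
  then obtain p where "p \<in> M" and lim: "(\<lambda>n. hnorm ip (X n - p)) \<longlonglongrightarrow> 0"
    using M X(1) unfolding complete_subspace_def by blast
  have "hnorm ip (x - p) \<le> sqrt (d + inverse (real (Suc n))) + hnorm ip (X n - p)" for n
    using hnorm_triangle_diff[of x p "X n"] real_le_rsqrt[OF less_imp_le[OF X(2)[of n]]] by linarith
  moreover have "(\<lambda>n. sqrt (d + inverse (real (Suc n))) + hnorm ip (X n - p)) \<longlonglongrightarrow> sqrt d"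
    using tendsto_add[OF tendsto_real_sqrt[OF tendsto_add[OF tendsto_const LIMSEQ_inverse_real_of_nat]] lim]
    by simp
  ultimately have "hnorm ip (x - p) \<le> sqrt d"
    by (intro LIMSEQ_le_const) auto
  moreover have "sqrt d \<le> hnorm ip (x - m)" if "m \<in> M" for m
    using real_sqrt_le_mono[OF lower[OF that]] hnorm_nonneg by simp
  ultimately show ?thesis
    using \<open>p \<in> M\<close> order_trans by blast
qed

lemma closest_point_orthogonal:
  assumes M: "complete_subspace M" and "p \<in> M" "m \<in> M"
    and closest: "\<forall>m\<in>M. hnorm ip (x - p) \<le> hnorm ip (x - m)"
  shows "ip (x - p) m = 0"
proof (cases "m = 0")
  case False
  define t where "t = ip (x - p) m / ip m m"
  have "p + sc t m \<in> M"
    using M \<open>p \<in> M\<close> \<open>m \<in> M\<close> unfolding complete_subspace_def by blast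
  then have "(hnorm ip (x - p))\<^sup>2 \<le> (hnorm ip ((x - p) - sc t m))\<^sup>2"
    using closest hnorm_nonneg by (simp add: diff_diff_eq power_mono)
  then have "(cmod (ip (x - p) m))\<^sup>2 / (hnorm ip m)\<^sup>2 \<le> 0"
    unfolding t_def power2_hnorm_diff_projection[OF False] by simp
  then show ?thesis
    using False by (simp add: divide_le_0_iff)
qed simp

lemma orthogonal_projection_exists:
  assumes "complete_subspace M"
  shows "\<exists>p\<in>M. \<forall>m\<in>M. ip (x - p) m = 0"
  using closest_point_exists[OF assms] closest_point_orthogonal[OF assms] by blast

lemma kernel_complete_subspace:
  assumes f: "bounded_functional sc (hnorm ip) f"
  shows "complete_subspace {x. f x = 0}"
  unfolding complete_subspace_def
proof (intro conjI ballI allI impI)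
  show "0 \<in> {x. f x = 0}"
    using bounded_functional_zero[OF f] by simp
  show "a + b \<in> {x. f x = 0}" "sc c a \<in> {x. f x = 0}" if "a \<in> {x. f x = 0}" "b \<in> {x. f x = 0}" for a b c
    using f that unfolding bounded_functional_def by auto
  fix X
  assume X: "range X \<subseteq> {x. f x = 0}" and "cauchy X"
  then obtain l where lim: "(\<lambda>n. hnorm ip (X n - l)) \<longlonglongrightarrow> 0"
    using cauchy_converges by blast
  obtain C where C: "\<And>x. cmod (f x) \<le> C * hnorm ip x"
    using f unfolding bounded_functional_def by blast
  have "cmod (f l) \<le> C * hnorm ip (X n - l)" for n
    using C[of "X n - l"] X bounded_functional_diff[OF f, of "X n" l] by (auto simp: image_subset_iff)
  then have "cmod (f l) \<le> C * 0"
    by (intro LIMSEQ_le_const[OF tendsto_mult_left[OF lim]]) auto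
  then show "\<exists>l\<in>{x. f x = 0}. (\<lambda>n. hnorm ip (X n - l)) \<longlonglongrightarrow> 0"
    using lim by auto
qed

text \<open>The representative is a multiple of the component, orthogonal to the kernel, of any vector
  outside the kernel.\<close>
lemma riesz_representation:
  assumes f: "bounded_functional sc (hnorm ip) f"
  shows "\<exists>r. \<forall>x. f x = ip x r"
proof (cases "\<forall>x. f x = 0")
  case True
  then show ?thesis
    by (intro exI[of _ 0]) simp
next
  case False
  then obtain z where "f z \<noteq> 0"
    by blast
  obtain p where "f p = 0" and orth: "\<And>m. f m = 0 \<Longrightarrow> ip (z - p) m = 0"
    using orthogonal_projection_exists[OF kernel_complete_subspace[OF f], of z] by blast
  define z0 where "z0 = z - p"
  have "f z0 \<noteq> 0"
    using \<open>f z \<noteq> 0\<close> \<open>f p = 0\<close> bounded_functional_diff[OF f] unfolding z0_def by simp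
  then have "ip z0 z0 \<noteq> 0"
    using ip_self_eq_0D bounded_functional_zero[OF f] by auto
  have "f x = ip x (sc (cnj (f z0 / ip z0 z0)) z0)" for x
  proof -
    have "f (sc (f x) z0 - sc (f z0) x) = 0"
      using f unfolding bounded_functional_diff[OF f] bounded_functional_def by simp
    then have "ip (sc (f x) z0 - sc (f z0) x) z0 = 0"
      using orth ip_cnj_commute unfolding z0_def by (metis complex_cnj_zero)
    then have "f x * ip z0 z0 = f z0 * ip x z0"
      unfolding ip_diff_left ip_scale_left by simp
    then show ?thesis
      using \<open>ip z0 z0 \<noteq> 0\<close> by (simp add: ip_scale_right field_simps)
  qed
  then show ?thesis
    by blast
qed

end

section \<open>Forms satisfying the inf-sup conditions\<close>

lemma eq_0_if_le_SUP_0: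
  assumes "ennreal (l * a) \<le> (SUP w\<in>S. ennreal (g w))" and "\<And>w. w \<in> S \<Longrightarrow> g w = 0"
    and "0 < l" and "0 \<le> a"
  shows "a = (0::real)"
proof -
  have "(SUP w\<in>S. ennreal (g w)) = 0"
    using assms(2) by (simp add: bot_ennreal[symmetric])
  then have "l * a \<le> 0"
    using assms(1) ennreal_eq_0_iff by auto
  then show ?thesis
    using assms(3,4) by (simp add: mult_le_0_iff)
qed

locale inf_sup_form =
  H1: complex_hilbert_space s1 i1 + H2: complex_hilbert_space s2 i2
  for s1 :: "complex \<Rightarrow> 'a::ab_group_add \<Rightarrow> 'a" and i1
    and s2 :: "complex \<Rightarrow> 'b::ab_group_add \<Rightarrow> 'b" and i2 +
  fixes b :: "'a \<Rightarrow> 'b \<Rightarrow> complex" and la :: real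
  assumes bounded_bilinear: "bounded_bilin_on UNIV s1 (hnorm i1) UNIV s2 (hnorm i2) b"
    and la_pos: "0 < la"
    and inf_sup_right:
      "\<And>v. ennreal (la * hnorm i2 v) \<le> (SUP w\<in>{w. w \<noteq> 0}. ennreal (cmod (b w v) / hnorm i1 w))"
    and inf_sup_left:
      "\<And>u. ennreal (la * hnorm i1 u) \<le> (SUP w\<in>{w. w \<noteq> 0}. ennreal (cmod (b u w) / hnorm i2 w))"
begin

lemma b_add_left: "b (x + x') y = b x y + b x' y"
  using bounded_bilinear unfolding bounded_bilin_on_def by blast

lemma b_scale_left: "b (s1 c x) y = c * b x y"
  using bounded_bilinear unfolding bounded_bilin_on_def by blast

lemma b_add_right: "b x (y + y') = b x y + b x y'"
  using bounded_bilinear unfolding bounded_bilin_on_def by blast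

lemma b_scale_right: "b x (s2 c y) = c * b x y"
  using bounded_bilinear unfolding bounded_bilin_on_def by blast

lemma b_diff_right: "b x (y - y') = b x y - b x y'"
  using b_add_right[of x "y - y'" y'] by simp

lemma b_bounded:
  obtains K where "0 \<le> K" "\<And>x y. cmod (b x y) \<le> K * hnorm i1 x * hnorm i2 y"
proof -
  obtain K where K: "\<And>x y. cmod (b x y) \<le> K * hnorm i1 x * hnorm i2 y"
    using bounded_bilinear unfolding bounded_bilin_on_def by blast
  have "cmod (b x y) \<le> max K 0 * hnorm i1 x * hnorm i2 y" for x y
    using K[of x y] mult_right_mono[of K "max K 0" "hnorm i1 x * hnorm i2 y"]
      H1.hnorm_nonneg[of x] H2.hnorm_nonneg[of y] by (simp add: mult.assoc)
  then show ?thesis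
    using that[of "max K 0"] by simp
qed

lemma bounded_functional_b_left: "bounded_functional s1 (hnorm i1) (\<lambda>x. b x v)"
proof -
  obtain K where "0 \<le> K" "\<And>x y. cmod (b x y) \<le> K * hnorm i1 x * hnorm i2 y"
    using b_bounded by blast
  then show ?thesis
    unfolding bounded_functional_def using H2.hnorm_nonneg[of v]
    by (intro conjI allI exI[of _ "K * hnorm i2 v"]) (auto simp: b_add_left b_scale_left algebra_simps)
qed

lemma b_right_eq_0D: "(\<And>x. b x v = 0) \<Longrightarrow> v = 0"
  using eq_0_if_le_SUP_0[OF inf_sup_right[of v] _ la_pos H2.hnorm_nonneg] by simp

lemma b_left_eq_0D: "(\<And>y. b u y = 0) \<Longrightarrow> u = 0"
  using eq_0_if_le_SUP_0[OF inf_sup_left[of u] _ la_pos H1.hnorm_nonneg] by simp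

lemma b_right_injective: "(\<And>x. b x v = b x v') \<Longrightarrow> v = v'"
  using b_right_eq_0D[of "v - v'"] by (simp add: b_diff_right)

definition riesz_rep :: "'b \<Rightarrow> 'a" where
  "riesz_rep v = (SOME r. \<forall>x. b x v = i1 x r)"

text \<open>Only used instantiated or reversed: as an unrestricted rewrite rule it does not terminate.\<close>
lemma b_eq_ip_riesz_rep: "b x v = i1 x (riesz_rep v)"
  using someI_ex[OF H1.riesz_representation[OF bounded_functional_b_left[of v]]]
  unfolding riesz_rep_def by blast

lemma riesz_rep_add: "riesz_rep (v + w) = riesz_rep v + riesz_rep w"
  by (rule H1.ip_right_eqI) (simp add: H1.ip_add_right b_add_right flip: b_eq_ip_riesz_rep)

lemma riesz_rep_diff: "riesz_rep (v - w) = riesz_rep v - riesz_rep w"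
  using riesz_rep_add[of "v - w" w] by simp

lemma riesz_rep_scale: "s1 c (riesz_rep v) = riesz_rep (s2 (cnj c) v)"
  by (rule H1.ip_right_eqI) (simp add: H1.ip_scale_right b_scale_right flip: b_eq_ip_riesz_rep)

lemma hnorm_riesz_rep_lower: "la * hnorm i2 v \<le> hnorm i1 (riesz_rep v)"
proof -
  have "(SUP w\<in>{w. w \<noteq> 0}. ennreal (cmod (b w v) / hnorm i1 w)) \<le> ennreal (hnorm i1 (riesz_rep v))"
  proof (rule SUP_least)
    fix w :: 'a
    assume "w \<in> {w. w \<noteq> 0}"
    then have "0 < hnorm i1 w"
      using H1.hnorm_pos by blast
    moreover have "cmod (b w v) \<le> hnorm i1 w * hnorm i1 (riesz_rep v)"
      unfolding b_eq_ip_riesz_rep[of w v] by (rule H1.cauchy_schwarz)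
    ultimately show "ennreal (cmod (b w v) / hnorm i1 w) \<le> ennreal (hnorm i1 (riesz_rep v))"
      by (metis ennreal_leI mult.commute pos_divide_le_eq)
  qed
  then have "ennreal (la * hnorm i2 v) \<le> ennreal (hnorm i1 (riesz_rep v))"
    using inf_sup_right[of v] order_trans by fast
  then show ?thesis
    using H1.hnorm_nonneg by (simp add: ennreal_le_iff)
qed

lemma hnorm_riesz_rep_upper:
  obtains K where "0 \<le> K" "\<And>v. hnorm i1 (riesz_rep v) \<le> K * hnorm i2 v"
proof -
  obtain K where K: "0 \<le> K" "\<And>x y. cmod (b x y) \<le> K * hnorm i1 x * hnorm i2 y"
    using b_bounded by blast
  have "hnorm i1 (riesz_rep v) \<le> K * hnorm i2 v" for v
  proof (cases "riesz_rep v = 0")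
    case False
    have "hnorm i1 (riesz_rep v) * hnorm i1 (riesz_rep v) = Re (b (riesz_rep v) v)"
      unfolding b_eq_ip_riesz_rep[of "riesz_rep v" v] H1.power2_hnorm[symmetric] by (simp add: power2_eq_square)
    also have "\<dots> \<le> hnorm i1 (riesz_rep v) * (K * hnorm i2 v)"
      using complex_Re_le_cmod[of "b (riesz_rep v) v"] K(2)[of "riesz_rep v" v] by (simp add: algebra_simps)
    finally show ?thesis
      using H1.hnorm_pos[OF False] by simp
  qed (use K(1) H2.hnorm_nonneg in simp)
  then show ?thesis
    using that K(1) by blast
qed

lemma range_riesz_rep_complete: "H1.complete_subspace (range riesz_rep)"
  unfolding H1.complete_subspace_def
proof (intro conjI ballI allI impI)
  show "0 \<in> range riesz_rep"
    using riesz_rep_diff[of 0 0] by (metis diff_self rangeI)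
  show "a + a' \<in> range riesz_rep" "s1 c a \<in> range riesz_rep"
    if "a \<in> range riesz_rep" "a' \<in> range riesz_rep" for a a' c
    using that by (auto simp: riesz_rep_scale simp flip: riesz_rep_add)
  fix X
  assume "range X \<subseteq> range riesz_rep" and "H1.cauchy X"
  then have "\<forall>k. \<exists>v. X k = riesz_rep v"
    by blast
  then obtain V where XV: "\<And>k. X k = riesz_rep (V k)"
    by metis
  have "H2.cauchy V"
    unfolding H2.cauchy_def
  proof (intro allI impI)
    fix e :: real
    assume "0 < e"
    then obtain N where N: "\<forall>m\<ge>N. \<forall>n\<ge>N. hnorm i1 (X m - X n) < la * e"
      using \<open>H1.cauchy X\<close> la_pos unfolding H1.cauchy_def by (meson mult_pos_pos)
    have "hnorm i2 (V m - V n) < e" if "N \<le> m" "N \<le> n" for m n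
    proof -
      have "la * hnorm i2 (V m - V n) < la * e"
        using N that hnorm_riesz_rep_lower[of "V m - V n"] unfolding XV riesz_rep_diff
        by (meson le_less_trans)
      then show ?thesis
        using la_pos by simp
    qed
    then show "\<exists>N. \<forall>m\<ge>N. \<forall>n\<ge>N. hnorm i2 (V m - V n) < e"
      by blast
  qed
  then obtain v where lim: "(\<lambda>n. hnorm i2 (V n - v)) \<longlonglongrightarrow> 0"
    using H2.cauchy_converges by blast
  obtain K where K: "\<And>v. hnorm i1 (riesz_rep v) \<le> K * hnorm i2 v"
    using hnorm_riesz_rep_upper by blast
  have "hnorm i1 (X n - riesz_rep v) \<le> K * hnorm i2 (V n - v)" for n
    using K[of "V n - v"] by (simp add: XV riesz_rep_diff)
  then have "(\<lambda>n. hnorm i1 (X n - riesz_rep v)) \<longlonglongrightarrow> 0"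
    by (intro tendsto_sandwich[OF always_eventually always_eventually tendsto_const
          tendsto_mult_right_zero[OF lim]]) (auto simp: H1.hnorm_nonneg)
  then show "\<exists>l\<in>range riesz_rep. (\<lambda>n. hnorm i1 (X n - l)) \<longlonglongrightarrow> 0"
    by blast
qed

text \<open>Babuska--Lax--Milgram: the range of the Riesz map of b is a complete subspace whose orthogonal
  complement is trivial by the second inf-sup condition, so it contains the Riesz representative of
  any right-hand side.\<close>
lemma b_solvable:
  assumes "bounded_functional s1 (hnorm i1) H"
  shows "\<exists>v. \<forall>x. b x v = H x"
proof -
  obtain h where h: "\<And>x. H x = i1 x h"
    using H1.riesz_representation[OF assms] by blast
  obtain p where "p \<in> range riesz_rep" and orth: "\<And>m. m \<in> range riesz_rep \<Longrightarrow> i1 (h - p) m = 0"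
    using H1.orthogonal_projection_exists[OF range_riesz_rep_complete] by blast
  then obtain v where "p = riesz_rep v"
    by blast
  have "h - p = 0"
    using orth b_eq_ip_riesz_rep by (intro b_left_eq_0D) (metis rangeI)
  then have "h = riesz_rep v"
    using \<open>p = riesz_rep v\<close> by simp
  then have "H x = b x v" for x
    using h b_eq_ip_riesz_rep by metis
  then show ?thesis
    by metis
qed

end

section \<open>Newton and layer potentials\<close>

lemma qnorm_le: "(\<And>x. 0 \<le> N x) \<Longrightarrow> qnorm N R (R x) \<le> N x"
  unfolding qnorm_def by (rule cInf_lower) (auto intro: bdd_belowI[of _ 0])

lemma qnorm_nonneg: "(\<And>x. 0 \<le> N x) \<Longrightarrow> y \<in> range R \<Longrightarrow> 0 \<le> qnorm N R y"
  unfolding qnorm_def by (rule cInf_greatest) auto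

lemma le_mult_cInf:
  fixes a c :: real
  assumes "0 \<le> c" and "S \<noteq> {}" and "\<And>s. s \<in> S \<Longrightarrow> a \<le> c * s"
  shows "a \<le> c * Inf S"
proof (cases "c = 0")
  case True
  then show ?thesis
    using assms(2,3) by fastforce
next
  case False
  then have "a / c \<le> Inf S"
    using assms by (intro cInf_greatest) (auto simp: divide_le_eq mult.commute)
  then show ?thesis
    using assms(1) False by (simp add: divide_le_eq mult.commute)
qed

lemma bounded_functional_restricted_form:
  assumes b: "bounded_bilin_on (range r1) s1' (qnorm n1 r1) (range r2) s2' (qnorm n2 r2) b"
    and r1: "Vector_Spaces.linear s1 s1' r1"
    and n1: "\<And>x. 0 \<le> n1 x" and n2: "\<And>x. 0 \<le> n2 x" and c: "c \<in> range r2"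
  shows "bounded_functional s1 n1 (\<lambda>x. b (r1 x) c)"
proof -
  obtain K where K: "\<forall>x\<in>range r1. \<forall>y\<in>range r2. cmod (b x y) \<le> K * qnorm n1 r1 x * qnorm n2 r2 y"
    using b unfolding bounded_bilin_on_def by blast
  have qc: "0 \<le> qnorm n2 r2 c"
    using qnorm_nonneg[OF n2 c] .
  have "cmod (b (r1 x) c) \<le> (max K 0 * qnorm n2 r2 c) * n1 x" for x
  proof -
    have "cmod (b (r1 x) c) \<le> K * qnorm n1 r1 (r1 x) * qnorm n2 r2 c"
      using K c by blast
    also have "\<dots> \<le> max K 0 * qnorm n1 r1 (r1 x) * qnorm n2 r2 c"
      using qnorm_nonneg[of n1, OF n1 rangeI] qc by (intro mult_right_mono) auto
    also have "\<dots> \<le> max K 0 * n1 x * qnorm n2 r2 c"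
      using qc qnorm_le[of n1, OF n1] by (intro mult_right_mono mult_left_mono) auto
    finally show ?thesis
      by (simp add: ac_simps)
  qed
  moreover have "b (r1 (x + y)) c = b (r1 x) c + b (r1 y) c" "b (r1 (s1 k x)) c = k * b (r1 x) c" for x y k
    using b c unfolding bounded_bilin_on_def linear_map_add[OF r1] linear_map_scale[OF r1] by blast+
  ultimately show ?thesis
    unfolding bounded_functional_def using qc by (intro conjI allI exI[of _ "max K 0 * qnorm n2 r2 c"]) auto
qed

locale potential_framework =
  fixes F :: "('h1::ab_group_add, 'h2::ab_group_add, 'o1::ab_group_add, 'o2::ab_group_add,
      'c1::ab_group_add, 'c2::ab_group_add, 'd1::ab_group_add, 'd2::ab_group_add) frame"
  assumes abstract_framework: "abstract_framework F"
begin

sublocale inf_sup_form "sc1 F" "ip1 F" "sc2 F" "ip2 F" "bf F" "lam F"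
proof unfold_locales
qed (use abstract_framework in \<open>auto simp: abstract_framework_def\<close>)

lemma linear_tr1: "Vector_Spaces.linear (sc1 F) (scD1 F) (tr1 F)"
  using abstract_framework unfolding abstract_framework_def bounded_lin_def by blast

lemma linear_rO1: "Vector_Spaces.linear (sc1 F) (scO1 F) (rO1 F)"
  using abstract_framework unfolding abstract_framework_def bounded_lin_def by blast

lemma linear_rO2: "Vector_Spaces.linear (sc2 F) (scO2 F) (rO2 F)"
  using abstract_framework unfolding abstract_framework_def bounded_lin_def by blast

lemma linear_rC1: "Vector_Spaces.linear (sc1 F) (scC1 F) (rC1 F)"
  using abstract_framework unfolding abstract_framework_def bounded_lin_def by blast

lemma linear_rC2: "Vector_Spaces.linear (sc2 F) (scC2 F) (rC2 F)"
  using abstract_framework unfolding abstract_framework_def bounded_lin_def by blast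

lemma bf_split: "bf F u v = bO F (rO1 F u) (rO2 F v) + bC F (rC1 F u) (rC2 F v)"
  using abstract_framework unfolding abstract_framework_def by blast

lemma trace_gluing2:
  "tr2 F \<phi> = tr2 F \<psi> \<Longrightarrow> \<exists>w. rO2 F w = rO2 F \<phi> \<and> rC2 F w = rC2 F \<psi> \<and> tr2 F w = tr2 F \<phi>"
  using abstract_framework unfolding abstract_framework_def by blast

lemma bounded_functional_L_Om:
  "c \<in> range (rO2 F) \<Longrightarrow> bounded_functional (sc1 F) (hnorm (ip1 F)) (L_Om F c)"
  unfolding L_Om_def using abstract_framework linear_rO1 H1.hnorm_nonneg H2.hnorm_nonneg
  by (intro bounded_functional_restricted_form) (auto simp: abstract_framework_def)

lemma bounded_functional_L_C:
  "bounded_functional (sc1 F) (hnorm (ip1 F)) (L_C F (rC2 F G))"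
  unfolding L_C_def using abstract_framework linear_rC1 H1.hnorm_nonneg H2.hnorm_nonneg
  by (intro bounded_functional_restricted_form) (auto simp: abstract_framework_def)

lemma newton_eqI: "(\<And>\<phi>. bf F \<phi> v = H \<phi>) \<Longrightarrow> newton F H = v"
  unfolding newton_def by (rule the_equality) (auto intro: b_right_injective)

lemma bf_newton: "bounded_functional (sc1 F) (hnorm (ip1 F)) H \<Longrightarrow> bf F \<phi> (newton F H) = H \<phi>"
  using b_solvable newton_eqI by metis

lemma newton_split: "newton F (L_Om F (rO2 F G)) + newton F (L_C F (rC2 F G)) = G"
proof -
  let ?NC = "newton F (L_C F (rC2 F G))"
  have "bf F \<phi> (G - ?NC) = L_Om F (rO2 F G) \<phi>" for \<phi>
    using bf_newton[OF bounded_functional_L_C[of G], of \<phi>]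
    unfolding b_diff_right by (simp add: bf_split[of \<phi> G] L_Om_def L_C_def)
  then have "newton F (L_Om F (rO2 F G)) = G - ?NC"
    by (rule newton_eqI)
  then show ?thesis
    by simp
qed

lemma N2_eqI:
  assumes "g \<in> N2 F" "g' \<in> N2 F" "\<And>\<phi>. g (tr1 F \<phi>) = g' (tr1 F \<phi>)"
  shows "g = g'"
proof
  fix x
  show "g x = g' x"
    using assms unfolding N2_def by (cases "x \<in> range (tr1 F)") auto
qed

lemma N2_factor_through_trace:
  assumes H: "bounded_functional (sc1 F) (hnorm (ip1 F)) H"
    and ker: "\<And>\<phi>. tr1 F \<phi> = 0 \<Longrightarrow> H \<phi> = 0"
  shows "\<exists>g\<in>N2 F. \<forall>\<phi>. g (tr1 F \<phi>) = H \<phi>"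
proof -
  have H_tr: "H \<phi> = H \<psi>" if "tr1 F \<phi> = tr1 F \<psi>" for \<phi> \<psi>
    using ker[of "\<phi> - \<psi>"] that bounded_functional_diff[OF H]
    by (simp add: linear_map_diff[OF linear_tr1])
  define g where "g x = (if x \<in> range (tr1 F) then H (SOME \<phi>. tr1 F \<phi> = x) else 0)" for x
  have g_tr: "g (tr1 F \<phi>) = H \<phi>" for \<phi>
  proof -
    have "tr1 F (SOME \<psi>. tr1 F \<psi> = tr1 F \<phi>) = tr1 F \<phi>"
      by (rule someI) (rule refl)
    then have "H (SOME \<psi>. tr1 F \<psi> = tr1 F \<phi>) = H \<phi>"
      by (rule H_tr)
    then show ?thesis
      unfolding g_def by simp
  qed
  obtain C where "0 \<le> C" and C: "\<And>\<phi>. cmod (H \<phi>) \<le> C * hnorm (ip1 F) \<phi>"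
    using H unfolding bounded_functional_def by blast
  have "cmod (g (tr1 F \<phi>)) \<le> C * qnorm (hnorm (ip1 F)) (tr1 F) (tr1 F \<phi>)" for \<phi>
    unfolding qnorm_def
  proof (rule le_mult_cInf[OF \<open>0 \<le> C\<close>])
    fix s
    assume "s \<in> hnorm (ip1 F) ` {\<psi>. tr1 F \<psi> = tr1 F \<phi>}"
    then obtain \<psi> where "tr1 F \<psi> = tr1 F \<phi>" and "s = hnorm (ip1 F) \<psi>"
      by blast
    then show "cmod (g (tr1 F \<phi>)) \<le> C * s"
      using C[of \<psi>] g_tr[of \<psi>] by simp
  qed blast
  moreover have "g (tr1 F \<phi> + tr1 F \<psi>) = g (tr1 F \<phi>) + g (tr1 F \<psi>)"
    "g (scD1 F c (tr1 F \<phi>)) = c * g (tr1 F \<phi>)" for \<phi> \<psi> c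
    using H g_tr unfolding bounded_functional_def
    by (simp_all flip: linear_map_add[OF linear_tr1] linear_map_scale[OF linear_tr1])
  ultimately have "g \<in> N2 F"
    unfolding N2_def by (auto simp: g_def)
  with g_tr show ?thesis
    by blast
qed

lemma neumann_trace:
  assumes "u \<in> HO2 F" and "L_Omega_zero F u"
  shows "neumann F u (tr1 F \<phi>) = L_Om F u \<phi>"
proof -
  obtain g where g: "g \<in> N2 F" "\<And>\<phi>. g (tr1 F \<phi>) = L_Om F u \<phi>"
    using N2_factor_through_trace[OF bounded_functional_L_Om] assms
    unfolding HO2_def L_Omega_zero_def L_Om_def by blast
  have "neumann F u = g"
    unfolding neumann_def by (rule the_equality) (use g N2_eqI in \<open>auto simp: L_Om_def\<close>)
  with g show ?thesis
    by simp
qed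

lemma single_layer_neumann:
  assumes "u \<in> HO2 F" and "L_Omega_zero F u"
  shows "single_layer F (neumann F u) = newton F (L_Om F u)"
  unfolding single_layer_def newton_def neumann_trace[OF assms] ..

end

theorem lemma5p2:
  fixes F :: "('h1::ab_group_add, 'h2::ab_group_add, 'o1::ab_group_add, 'o2::ab_group_add,
      'c1::ab_group_add, 'c2::ab_group_add, 'd1::ab_group_add, 'd2::ab_group_add) frame"
    and u :: "'o2" and U :: "'h2"
  assumes "abstract_framework F"
    and "u \<in> HO2 F"
    and "L_Omega_zero F u"
    and "rO2 F U = u"
  shows "u = - double_layer_Om F (tr2 F U) + rO2 F (single_layer F (neumann F u))
         \<and> 0 = double_layer_C F (tr2 F U) + rC2 F (single_layer F (neumann F u))"
proof -
  interpret potential_framework F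
    by (rule potential_framework.intro) (fact assms(1))
  define G where "G = (SOME G. tr2 F G = tr2 F U)"
  have "tr2 F G = tr2 F U"
    unfolding G_def by (rule someI) (rule refl)
  then obtain W where W: "rO2 F W = u" "rC2 F W = rC2 F G"
    using trace_gluing2 assms(4) by metis
  define NC where "NC = newton F (L_C F (rC2 F G))"
  have "newton F (L_Om F (rO2 F G)) = G - NC"
    using newton_split[of G] unfolding NC_def by (simp add: eq_diff_eq)
  moreover have "single_layer F (neumann F u) = W - NC"
    using single_layer_neumann[OF assms(2,3)] newton_split[of W] W unfolding NC_def
    by (simp add: eq_diff_eq)
  ultimately show ?thesis
    unfolding double_layer_Om_def double_layer_C_def Let_def G_def[symmetric] NC_def[symmetric]
    using W by (simp add: linear_map_diff[OF linear_rO2] linear_map_diff[OF linear_rC2])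
qed

end
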